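(* Consider a commutative diagram of finitely generated free abelian groups consisting of injective morphisms $f:A\to B$ and $f':A'\to B'$ and morphisms $g:A\to A'$, $h:B\to B'$ with $f'\circ g=h\circ f$. Assume that $f$ and $f'$ have finite exponent. (1) If $h(B)=\lambda B'$ for some nonzero integer $\lambda$, then $(\exp f)\lambda A'\leq g(A)\leq \frac{\lambda}{\gcd(\lambda,\exp f')}A'$. (2) If $g(A)\leq\mu A'$ for some nonzero integer $\mu$, then $h(B)\leq\frac{\mu}{\gcd(\mu,\exp f)}B'$. (3) If $h$ has finite exponent then so does $g$, and $\exp g\leq (\exp f)(\exp h)$.
   Context: For a morphism $u:M\to N$ of finitely generated abelian groups, $\exp u:=\exp(N/u(M))$ if $N/u(M)$ is finite (where the exponent of a finite abelian group is the lcm of the orders of its elements), and $\exp u:=\infty$ otherwise; $u$ has finite exponent if $\exp u<\infty$. *)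

theory Defs
  imports Main "HOL-Library.Extended_Nat"
begin

definition zsc :: "int \<Rightarrow> 'a::ab_group_add \<Rightarrow> 'a" where
  "zsc k x = (if 0 \<le> k then (\<Sum>i<nat k. x) else - (\<Sum>i<nat (-k). x))"

definition zmultiples :: "int \<Rightarrow> 'a::ab_group_add set" where
  "zmultiples k = {zsc k x | x. True}"

definition fg_free_abelian :: "'a::ab_group_add itself \<Rightarrow> bool" where
  "fg_free_abelian _ \<longleftrightarrow> (\<exists>B::'a set. finite B \<and>
     (\<forall>x. \<exists>!c. (\<forall>b. b \<notin> B \<longrightarrow> c b = 0) \<and> x = (\<Sum>b\<in>B. zsc (c b) b)))"

definition additive :: "('a::ab_group_add \<Rightarrow> 'b::ab_group_add) \<Rightarrow> bool" where
  "additive f \<longleftrightarrow> (\<forall>x y. f (x + y) = f x + f y)"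

definition coset :: "'a::ab_group_add set \<Rightarrow> 'a \<Rightarrow> 'a set" where
  "coset U x = {y. y - x \<in> U}"

definition coset_ord :: "'a::ab_group_add set \<Rightarrow> 'a \<Rightarrow> nat" where
  "coset_ord U x = (LEAST k::nat. 0 < k \<and> zsc (int k) x \<in> U)"

text \<open>exp u = exponent of N/u(M) (lcm of element orders) if finite, \<infinity> otherwise.\<close>
definition hexp :: "('a::ab_group_add \<Rightarrow> 'b::ab_group_add) \<Rightarrow> enat" where
  "hexp u = (if finite (range (coset (range u)))
             then enat (Lcm (range (coset_ord (range u)))) else \<infinity>)"

end

theory Submission
  imports Defs "HOL-Library.FuncSet"
begin

text \<open>If the exponent \<open>e\<close> of a cokernel is finite, then \<open>e\<close> annihilates it: \<open>e B \<subseteq> f(A)\<close>.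
  Every assertion is a diagram chase in the commutative square driven by this fact.
  The lower bound in (1) and the statement (3) lift \<open>e y\<close> through \<open>f\<close> and use injectivity
  of \<open>f'\<close>; in (3) this shows that \<open>(exp f)(exp h)\<close> annihilates \<open>A'/g(A)\<close>, and an
  annihilated quotient of a finitely generated free group is finite with exponent dividing
  the annihilator. The upper bounds in (1) and (2) combine two multiples of one element
  by Bezout's identity; in (2) a common factor is first cancelled in the torsion-free \<open>B'\<close>.\<close>

lemma zsc_0 [simp]: "zsc 0 x = 0"
  by (simp add: zsc_def)

lemma zsc_succ: "zsc (k + 1) x = zsc k x + x"
proof (cases "k \<ge> 0")
  case True
  then have "nat (k + 1) = Suc (nat k)" by simp
  with True show ?thesis by (simp add: zsc_def add.commute)
next
  case False
  show ?thesis
  proof (cases "k = -1")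
    case True then show ?thesis by (simp add: zsc_def)
  next
    case False
    with \<open>\<not> k \<ge> 0\<close> have "nat (- k) = Suc (nat (- (k + 1)))" by simp
    with \<open>\<not> k \<ge> 0\<close> False show ?thesis by (simp add: zsc_def algebra_simps)
  qed
qed

lemma zsc_pred: "zsc (k - 1) x = zsc k x - x"
  using zsc_succ[of "k - 1" x] by simp

lemma zsc_add: "zsc (k + l) x = zsc k x + zsc l x"
proof (induction l rule: int_induct[where k = 0])
  case base then show ?case by simp
next
  case (step1 i)
  have "zsc (k + (i + 1)) x = zsc (k + i + 1) x" by (simp add: add.assoc)
  with step1 show ?case by (simp add: zsc_succ)
next
  case (step2 i)
  have "zsc (k + (i - 1)) x = zsc (k + i - 1) x" by (simp add: algebra_simps)
  with step2 show ?case by (simp add: zsc_pred)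
qed

lemma zsc_1 [simp]: "zsc 1 x = x"
  using zsc_succ[of 0 x] by simp

lemma zsc_uminus: "zsc (- k) x = - zsc k x"
  using zsc_add[of k "- k" x] by (simp add: eq_neg_iff_add_eq_0 add.commute)

lemma zsc_diff: "zsc (k - l) x = zsc k x - zsc l x"
  using zsc_add[of k "- l" x] by (simp add: zsc_uminus)

lemma zsc_mult: "zsc (k * l) x = zsc k (zsc l x)"
proof (induction k rule: int_induct[where k = 0])
  case base then show ?case by simp
next
  case (step1 i)
  then show ?case by (simp add: distrib_right zsc_add)
next
  case (step2 i)
  then show ?case by (simp add: left_diff_distrib zsc_diff)
qed

lemma additive_zsc: "additive (zsc k)"
  unfolding additive_def
proof (intro allI)
  fix x y :: 'a
  show "zsc k (x + y) = zsc k x + zsc k y"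
  proof (induction k rule: int_induct[where k = 0])
    case base then show ?case by simp
  next
    case (step1 i) then show ?case by (simp only: zsc_succ step1(2)) (simp add: algebra_simps)
  next
    case (step2 i) then show ?case by (simp only: zsc_pred step2(2)) (simp add: algebra_simps)
  qed
qed

lemma mem_zmultiples_iff: "x \<in> zmultiples k \<longleftrightarrow> (\<exists>y. x = zsc k y)"
  by (simp add: zmultiples_def)

lemma zmultiples_eq_range: "zmultiples k = range (zsc k)"
  by (auto simp: zmultiples_def)

lemma additive_0: "additive u \<Longrightarrow> u 0 = 0"
  unfolding additive_def by (metis add_cancel_right_right add_0)

lemma additive_diff: "additive u \<Longrightarrow> u (x - y) = u x - u y"
  unfolding additive_def by (metis add_diff_cancel diff_add_cancel eq_diff_eq)

lemma additive_commute_zsc: "additive u \<Longrightarrow> u (zsc k x) = zsc k (u x)"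
proof (induction k rule: int_induct[where k = 0])
  case base then show ?case by (simp add: additive_0)
next
  case (step1 i) then show ?case by (simp add: zsc_succ additive_def)
next
  case (step2 i) then show ?case by (simp add: zsc_pred additive_diff)
qed

lemma additive_sum: "additive u \<Longrightarrow> u (sum v S) = (\<Sum>i\<in>S. u (v i))"
proof (induction S rule: infinite_finite_induct)
  case (insert x F) then show ?case by (simp add: additive_def)
qed (simp_all add: additive_0)

lemma zsc_sum: "zsc k (sum v S) = (\<Sum>i\<in>S. zsc k (v i))"
  using additive_sum[OF additive_zsc] .

lemma additive_range_0: "additive u \<Longrightarrow> 0 \<in> range u"
  by (metis additive_0 rangeI)

lemma additive_range_add:
  assumes "additive u" "a \<in> range u" "b \<in> range u"
  shows "a + b \<in> range u"
proof -
  from assms(2,3) obtain x y where "a = u x" "b = u y" by blast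
  with assms(1) have "a + b = u (x + y)" by (simp add: additive_def)
  then show ?thesis by simp
qed

lemma additive_range_diff:
  assumes "additive u" "a \<in> range u" "b \<in> range u"
  shows "a - b \<in> range u"
proof -
  from assms(2,3) obtain x y where "a = u x" "b = u y" by blast
  with assms(1) have "a - b = u (x - y)" by (simp add: additive_diff)
  then show ?thesis by simp
qed

lemma additive_range_zsc:
  assumes "additive u" "a \<in> range u"
  shows "zsc k a \<in> range u"
proof -
  from assms(2) obtain x where "a = u x" by blast
  with assms(1) have "zsc k a = u (zsc k x)" by (simp add: additive_commute_zsc)
  then show ?thesis by simp
qed

lemma additive_range_zsc_gcd:
  assumes u: "additive u" and "zsc a y \<in> range u" "zsc b y \<in> range u"
  shows "zsc (gcd a b) y \<in> range u"
proof -
  obtain s t where st: "s * a + t * b = gcd a b" using bezout_int by blast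
  have "zsc (gcd a b) y = zsc (s * a + t * b) y" by (simp add: st)
  also have "\<dots> = zsc s (zsc a y) + zsc t (zsc b y)" by (simp add: zsc_add zsc_mult)
  finally show ?thesis
    using assms by (simp add: additive_range_add additive_range_zsc)
qed

lemma coset_eq_iff:
  assumes u: "additive u"
  shows "coset (range u) a = coset (range u) b \<longleftrightarrow> a - b \<in> range u"
proof
  assume "coset (range u) a = coset (range u) b"
  moreover have "a \<in> coset (range u) a" using additive_range_0[OF u] by (simp add: coset_def)
  ultimately show "a - b \<in> range u" by (simp add: coset_def)
next
  assume ab: "a - b \<in> range u"
  have "y - a \<in> range u \<longleftrightarrow> y - b \<in> range u" for y
    using additive_range_add[OF u _ ab, of "y - a"] additive_range_diff[OF u _ ab, of "y - b"]
    by auto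
  then show "coset (range u) a = coset (range u) b"
    by (simp add: coset_def)
qed

definition torsion_free :: "'a::ab_group_add itself \<Rightarrow> bool" where
  "torsion_free _ \<longleftrightarrow> (\<forall>d (x::'a). d \<noteq> 0 \<and> zsc d x = 0 \<longrightarrow> x = 0)"

lemma fg_free_abelian_imp_torsion_free:
  assumes "fg_free_abelian TYPE('a::ab_group_add)"
  shows "torsion_free TYPE('a)"
  unfolding torsion_free_def
proof (intro allI impI, elim conjE)
  fix d and z :: 'a
  assume d: "d \<noteq> 0" and dz: "zsc d z = 0"
  obtain B :: "'a set" where
    unique: "\<forall>x. \<exists>!c. (\<forall>b. b \<notin> B \<longrightarrow> c b = 0) \<and> x = (\<Sum>b\<in>B. zsc (c b) b)"
    using assms unfolding fg_free_abelian_def by blast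
  obtain c where c: "\<forall>b. b \<notin> B \<longrightarrow> c b = 0" "z = (\<Sum>b\<in>B. zsc (c b) b)"
    using unique by blast
  obtain c0 where c0: "\<And>c'. (\<forall>b. b \<notin> B \<longrightarrow> c' b = 0) \<and> 0 = (\<Sum>b\<in>B. zsc (c' b) b) \<Longrightarrow> c' = c0"
    using unique[rule_format, of 0] by blast
  have "(\<lambda>b. d * c b) = c0"
    by (rule c0) (use dz c in \<open>simp add: zsc_sum zsc_mult\<close>)
  moreover have "(\<lambda>b. 0) = c0" by (rule c0) simp
  ultimately have "(\<lambda>b. d * c b) = (\<lambda>b. 0)" by simp
  with d have "\<forall>b. c b = 0" by (metis mult_eq_0_iff)
  with c(2) show "z = 0" by simp
qed

lemma torsion_free_cancel_zsc:
  assumes "torsion_free TYPE('a::ab_group_add)" "d \<noteq> 0" "zsc d x = zsc d (y::'a)"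
  shows "x = y"
proof -
  have "zsc d (x - y) = 0" using assms(3) by (simp add: additive_diff[OF additive_zsc])
  with assms(1,2) have "x - y = 0" unfolding torsion_free_def by blast
  then show ?thesis by simp
qed

subsection \<open>Annihilators of cokernels and the exponent\<close>

definition annihilates_coker :: "int \<Rightarrow> ('a::ab_group_add \<Rightarrow> 'b::ab_group_add) \<Rightarrow> bool" where
  "annihilates_coker n u \<longleftrightarrow> (\<forall>y. zsc n y \<in> range u)"

lemma finite_quotient_ex_multiple_in_range:
  assumes u: "additive u" and fin: "finite (range (coset (range u)))"
  shows "\<exists>k::nat. 0 < k \<and> zsc (int k) y \<in> range u"
proof -
  let ?F = "\<lambda>k::nat. coset (range u) (zsc (int k) y)"
  have "range ?F \<subseteq> range (coset (range u))" by auto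
  with fin have "finite (range ?F)" by (rule finite_subset[rotated])
  then have "\<not> inj ?F" using finite_imageD infinite_UNIV_nat by blast
  then obtain i j where "i < j" "?F j = ?F i"
    unfolding inj_def by (metis linorder_neqE_nat)
  then have "zsc (int j - int i) y \<in> range u"
    using coset_eq_iff[OF u] by (simp add: zsc_diff)
  with \<open>i < j\<close> show ?thesis by (intro exI[of _ "j - i"]) (simp add: of_nat_diff)
qed

lemma coset_ord_LeastI:
  assumes "\<exists>k::nat. 0 < k \<and> zsc (int k) y \<in> U"
  shows "0 < coset_ord U y" "zsc (int (coset_ord U y)) y \<in> U"
  using LeastI_ex[OF assms] unfolding coset_ord_def by auto

lemma coset_ord_dvd:
  assumes u: "additive u" and N: "0 < N" and Ny: "zsc (int N) y \<in> range u"
  shows "coset_ord (range u) y dvd N"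
proof -
  define k where "k = coset_ord (range u) y"
  have "\<exists>k::nat. 0 < k \<and> zsc (int k) y \<in> range u" using N Ny by blast
  note k = coset_ord_LeastI[OF this, folded k_def]
  have "int (N mod k) = int N - int (N div k) * int k"
    by (metis add_diff_cancel_left' div_mult_mod_eq of_nat_add of_nat_mult)
  then have "zsc (int (N mod k)) y = zsc (int N) y - zsc (int (N div k)) (zsc (int k) y)"
    by (simp add: zsc_diff zsc_mult)
  then have "zsc (int (N mod k)) y \<in> range u"
    using Ny k(2) by (simp add: additive_range_diff additive_range_zsc u)
  moreover have "\<not> (0 < N mod k \<and> zsc (int (N mod k)) y \<in> range u)"
    unfolding k_def coset_ord_def by (rule not_less_Least) (use k(1) in \<open>simp add: k_def coset_ord_def\<close>)
  ultimately have "N mod k = 0" by simp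
  then show ?thesis by (simp add: k_def dvd_eq_mod_eq_0)
qed

lemma coset_ord_cong:
  assumes u: "additive u" and "coset (range u) y = coset (range u) y'"
  shows "coset_ord (range u) y = coset_ord (range u) y'"
proof -
  have yy': "y - y' \<in> range u" using assms coset_eq_iff by blast
  have "zsc k y \<in> range u \<longleftrightarrow> zsc k y' \<in> range u" for k
  proof -
    have w: "zsc k (y - y') \<in> range u" using additive_range_zsc[OF u yy'] .
    have "zsc k y = zsc k y' + zsc k (y - y')"
      by (simp add: additive_diff[OF additive_zsc])
    then show ?thesis
      using additive_range_add[OF u _ w, of "zsc k y'"] additive_range_diff[OF u _ w, of "zsc k y"]
      by auto
  qed
  then show ?thesis unfolding coset_ord_def by simp
qed

lemma finite_quotient_imp_finite_range_coset_ord: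
  assumes u: "additive u" and fin: "finite (range (coset (range u)))"
  shows "finite (range (coset_ord (range u)))"
proof -
  let ?rep = "\<lambda>c. SOME y. coset (range u) y = c"
  have "coset_ord (range u) y = coset_ord (range u) (?rep (coset (range u) y))" for y
    by (rule coset_ord_cong[OF u]) (metis (mono_tags) someI)
  then have rep_eq: "coset_ord (range u) = (\<lambda>y. coset_ord (range u) (?rep (coset (range u) y)))"
    by blast
  show ?thesis by (subst rep_eq) (rule finite_range_imageI[OF fin])
qed

lemma hexp_finite_imp_annihilates_coker:
  assumes u: "additive u" and fin: "hexp u < \<infinity>"
  shows "0 < the_enat (hexp u)" "annihilates_coker (int (the_enat (hexp u))) u"
proof -
  let ?ords = "range (coset_ord (range u))"
  have finQ: "finite (range (coset (range u)))"
    using fin by (auto simp: hexp_def split: if_splits)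
  have ord: "0 < coset_ord (range u) y" "zsc (int (coset_ord (range u) y)) y \<in> range u" for y
    using coset_ord_LeastI[OF finite_quotient_ex_multiple_in_range[OF u finQ]] by blast+
  have hexp_eq: "the_enat (hexp u) = Lcm ?ords" using finQ by (simp add: hexp_def)
  have "0 \<notin> ?ords" using ord(1) by (metis less_irrefl rangeE)
  with finite_quotient_imp_finite_range_coset_ord[OF u finQ] have "Lcm ?ords \<noteq> 0" by simp
  then show "0 < the_enat (hexp u)" by (simp add: hexp_eq)
  have "zsc (int (Lcm ?ords)) y \<in> range u" for y
  proof -
    have "coset_ord (range u) y dvd Lcm ?ords" by (rule dvd_Lcm) simp
    then obtain q where "Lcm ?ords = coset_ord (range u) y * q" by (rule dvdE)
    then have "zsc (int (Lcm ?ords)) y = zsc (int q) (zsc (int (coset_ord (range u) y)) y)"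
      by (simp add: zsc_mult[symmetric] mult.commute)
    with ord(2) show ?thesis by (simp add: additive_range_zsc u)
  qed
  then show "annihilates_coker (int (the_enat (hexp u))) u"
    by (simp add: annihilates_coker_def hexp_eq)
qed

lemma annihilates_coker_imp_finite_quotient:
  fixes u :: "'a::ab_group_add \<Rightarrow> 'b::ab_group_add"
  assumes free: "fg_free_abelian TYPE('b)" and u: "additive u"
    and N: "0 < N" and ann: "annihilates_coker N u"
  shows "finite (range (coset (range u)))"
proof -
  obtain B :: "'b set" where B: "finite B"
    and unique: "\<forall>x. \<exists>!c. (\<forall>b. b \<notin> B \<longrightarrow> c b = 0) \<and> x = (\<Sum>b\<in>B. zsc (c b) b)"
    using free unfolding fg_free_abelian_def by blast
  obtain c where c: "\<And>x. x = (\<Sum>b\<in>B. zsc (c x b) b)" using unique by metis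
  let ?reps = "(\<lambda>d. coset (range u) (\<Sum>b\<in>B. zsc (d b) b)) ` (B \<rightarrow>\<^sub>E {0..<N})"
  have "range (coset (range u)) \<subseteq> ?reps"
  proof (rule image_subsetI)
    fix x
    define d where "d = restrict (\<lambda>b. c x b mod N) B"
    have "x - (\<Sum>b\<in>B. zsc (d b) b) = (\<Sum>b\<in>B. zsc (c x b) b - zsc (c x b mod N) b)"
      by (subst c[of x]) (simp add: d_def sum_subtractf)
    also have "\<dots> = zsc N (\<Sum>b\<in>B. zsc (c x b div N) b)"
      by (simp add: zsc_sum minus_mod_eq_mult_div flip: zsc_diff zsc_mult)
    finally have "coset (range u) x = coset (range u) (\<Sum>b\<in>B. zsc (d b) b)"
      using ann coset_eq_iff[OF u] by (simp add: annihilates_coker_def)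
    moreover have "d \<in> B \<rightarrow>\<^sub>E {0..<N}" using N by (auto simp: d_def)
    ultimately show "coset (range u) x \<in> ?reps" by blast
  qed
  moreover have "finite ?reps" using B by (simp add: finite_PiE)
  ultimately show ?thesis by (rule finite_subset)
qed

lemma hexp_le_annihilator:
  fixes u :: "'a::ab_group_add \<Rightarrow> 'b::ab_group_add"
  assumes free: "fg_free_abelian TYPE('b)" and u: "additive u"
    and N: "0 < N" and ann: "annihilates_coker (int N) u"
  shows "hexp u \<le> enat N"
proof -
  have "coset_ord (range u) y dvd N" for y
    using coset_ord_dvd[OF u N] ann by (simp add: annihilates_coker_def)
  then have "Lcm (range (coset_ord (range u))) \<le> N"
    using N by (simp add: Lcm_least dvd_imp_le)
  moreover have "finite (range (coset (range u)))"
    using annihilates_coker_imp_finite_quotient[OF free u _ ann] N by simp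
  ultimately show ?thesis by (simp add: hexp_def)
qed

subsection \<open>Diagram chases in a commutative square\<close>

context
  fixes f :: "'a::ab_group_add \<Rightarrow> 'b::ab_group_add"
    and f' :: "'c::ab_group_add \<Rightarrow> 'd::ab_group_add"
    and g :: "'a \<Rightarrow> 'c" and h :: "'b \<Rightarrow> 'd"
  assumes hom: "additive f'" "additive h"
    and comm: "\<And>x. f' (g x) = h (f x)"
begin

lemma square_lift_multiple:
  assumes inj: "inj f'" and ann: "annihilates_coker e f" and "zsc k (f' y) \<in> range h"
  shows "zsc (e * k) y \<in> range g"
proof -
  obtain b where b: "h b = zsc k (f' y)" using assms(3) by auto
  obtain a where a: "f a = zsc e b" using ann by (metis annihilates_coker_def rangeE)
  have "f' (g a) = f' (zsc (e * k) y)"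
    by (simp add: comm a b zsc_mult additive_commute_zsc hom)
  with inj have "g a = zsc (e * k) y" by (rule injD)
  then show ?thesis by (metis rangeI)
qed

lemma square_zmultiples_subset_range_g:
  assumes "inj f'" "annihilates_coker e f" and "zmultiples lam \<subseteq> range h"
  shows "zmultiples (e * lam) \<subseteq> range g"
proof
  fix x :: 'c assume "x \<in> zmultiples (e * lam)"
  then obtain y where "x = zsc (e * lam) y" unfolding mem_zmultiples_iff by blast
  moreover have "zsc lam (f' y) \<in> range h" using assms(3) by (auto simp: zmultiples_eq_range)
  ultimately show "x \<in> range g" using square_lift_multiple[OF assms(1,2)] by blast
qed

lemma square_range_g_subset_zmultiples:
  assumes inj: "inj f'" and ann: "annihilates_coker e' f'" and h_lam: "range h \<subseteq> zmultiples lam"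
  shows "range g \<subseteq> zmultiples (lam div gcd lam e')"
proof (rule image_subsetI)
  fix a
  have "f' (g a) \<in> zmultiples lam" using h_lam comm by auto
  then obtain y where y: "f' (g a) = zsc lam y" unfolding mem_zmultiples_iff by blast
  have "zsc (gcd lam e') y \<in> range f'"
    by (rule additive_range_zsc_gcd) (use hom y[symmetric] ann in \<open>auto simp: annihilates_coker_def\<close>)
  then obtain c where c: "f' c = zsc (gcd lam e') y" by auto
  have "f' (g a) = f' (zsc (lam div gcd lam e') c)"
    by (simp add: y c additive_commute_zsc hom flip: zsc_mult)
  with inj have "g a = zsc (lam div gcd lam e') c" by (rule injD)
  then show "g a \<in> zmultiples (lam div gcd lam e')" by (auto simp: mem_zmultiples_iff)
qed

lemma square_range_h_subset_zmultiples:
  assumes tf: "torsion_free TYPE('d)" and ann: "annihilates_coker e f"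
    and mu: "\<mu> \<noteq> 0" and g_mu: "range g \<subseteq> zmultiples \<mu>"
  shows "range h \<subseteq> zmultiples (\<mu> div gcd \<mu> e)"
proof (rule image_subsetI)
  fix b
  define d where "d = gcd \<mu> e"
  define m where "m = \<mu> div d"
  define n where "n = e div d"
  have d: "d \<noteq> 0" using mu by (simp add: d_def)
  have "coprime m n" unfolding m_def n_def d_def using mu by (intro div_gcd_coprime) simp
  obtain a where a: "f a = zsc e b" using ann by (metis annihilates_coker_def rangeE)
  have "g a \<in> zmultiples \<mu>" using g_mu by blast
  then obtain a' where a': "g a = zsc \<mu> a'" unfolding mem_zmultiples_iff by blast
  have "zsc e (h b) = h (f a)" by (simp add: a additive_commute_zsc hom)
  also have "\<dots> = zsc \<mu> (f' a')" by (simp flip: comm add: a' additive_commute_zsc hom)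
  finally have "zsc e (h b) = zsc \<mu> (f' a')" .
  then have "zsc d (zsc n (h b)) = zsc d (zsc m (f' a'))"
    by (simp add: m_def n_def d_def flip: zsc_mult)
  then have nm: "zsc n (h b) = zsc m (f' a')"
    using torsion_free_cancel_zsc[OF tf d] by blast
  have "zsc (gcd m n) (h b) \<in> range (zsc m)"
    by (rule additive_range_zsc_gcd[OF additive_zsc]) (auto simp: nm)
  with \<open>coprime m n\<close> show "h b \<in> zmultiples (\<mu> div gcd \<mu> e)"
    by (simp add: zmultiples_eq_range m_def d_def)
qed

lemma square_annihilates_coker_g:
  assumes "inj f'" "annihilates_coker e f" "annihilates_coker k h"
  shows "annihilates_coker (e * k) g"
  unfolding annihilates_coker_def
proof
  fix y
  show "zsc (e * k) y \<in> range g"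
    by (rule square_lift_multiple[OF assms(1,2)]) (use assms(3) in \<open>simp add: annihilates_coker_def\<close>)
qed

end

theorem lemma3p18:
  fixes f :: "'a::ab_group_add \<Rightarrow> 'b::ab_group_add"
    and f' :: "'c::ab_group_add \<Rightarrow> 'd::ab_group_add"
    and g :: "'a \<Rightarrow> 'c" and h :: "'b \<Rightarrow> 'd"
  assumes freeA: "fg_free_abelian TYPE('a)" and freeB: "fg_free_abelian TYPE('b)"
    and freeA': "fg_free_abelian TYPE('c)" and freeB': "fg_free_abelian TYPE('d)"
    and hom: "additive f" "additive f'" "additive g" "additive h"
    and inj: "inj f" "inj f'"
    and comm: "\<And>x. f' (g x) = h (f x)"
    and finf: "hexp f < \<infinity>" and finf': "hexp f' < \<infinity>"
  shows
    "(\<forall>lam::int. lam \<noteq> 0 \<and> range h = zmultiples lam \<longrightarrow>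
        zmultiples (int (the_enat (hexp f)) * lam) \<subseteq> range g \<and>
        range g \<subseteq> zmultiples (lam div gcd lam (int (the_enat (hexp f')))))
     \<and> (\<forall>\<mu>::int. \<mu> \<noteq> 0 \<and> range g \<subseteq> zmultiples \<mu> \<longrightarrow>
        range h \<subseteq> zmultiples (\<mu> div gcd \<mu> (int (the_enat (hexp f)))))
     \<and> (hexp h < \<infinity> \<longrightarrow> hexp g < \<infinity> \<and> hexp g \<le> hexp f * hexp h)"
proof -
  note square = hom(2,4) comm
  note ann_f = hexp_finite_imp_annihilates_coker[OF hom(1) finf]
  note ann_f' = hexp_finite_imp_annihilates_coker[OF hom(2) finf']
  have finite_mult: "hexp f * hexp h = enat (the_enat (hexp f) * the_enat (hexp h))"
    if "hexp h < \<infinity>"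
    using finf that by (cases "hexp f"; cases "hexp h") simp_all
  have exp_g: "hexp g \<le> hexp f * hexp h" if finh: "hexp h < \<infinity>"
  proof -
    note ann_h = hexp_finite_imp_annihilates_coker[OF hom(4) finh]
    let ?N = "the_enat (hexp f) * the_enat (hexp h)"
    have "hexp g \<le> enat ?N"
      using hexp_le_annihilator[OF freeA' hom(3), of ?N] ann_f ann_h
        square_annihilates_coker_g[OF square inj(2) ann_f(2) ann_h(2)] by simp
    with finite_mult[OF finh] show ?thesis by simp
  qed
  show ?thesis
  proof (intro conjI allI impI; (elim conjE)?)
    fix lam :: int assume "range h = zmultiples lam"
    then show "zmultiples (int (the_enat (hexp f)) * lam) \<subseteq> range g"
      by (intro square_zmultiples_subset_range_g[OF square inj(2) ann_f(2)]) simp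
  next
    fix lam :: int assume "range h = zmultiples lam"
    then show "range g \<subseteq> zmultiples (lam div gcd lam (int (the_enat (hexp f'))))"
      by (intro square_range_g_subset_zmultiples[OF square inj(2) ann_f'(2)]) simp
  next
    fix \<mu> :: int assume "\<mu> \<noteq> 0" "range g \<subseteq> zmultiples \<mu>"
    with fg_free_abelian_imp_torsion_free[OF freeB']
    show "range h \<subseteq> zmultiples (\<mu> div gcd \<mu> (int (the_enat (hexp f))))"
      by (rule square_range_h_subset_zmultiples[OF square _ ann_f(2)])
  next
    assume "hexp h < \<infinity>"
    then have "hexp f * hexp h < \<infinity>" by (simp add: finite_mult)
    with exp_g[OF \<open>hexp h < \<infinity>\<close>] show "hexp g < \<infinity>" by (rule le_less_trans)
  qed (use exp_g in simp)
qed

end
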